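(* Let $L\colon\mathbb R\times\mathbb R\to\mathbb R$, $(x,\dot x)\mapsto L(x,\dot x)$, be continuously differentiable with $L_x(0,0)=L_{\dot x}(0,0)=0$ and $L(0,\dot x)=0$ for every $\dot x\in\mathbb R$. Consider the problem $$\int_0^1L(x(t),\dot x(t))\,dt\to\min,\quad x(0)=x(1)=0.$$ If the function $\widehat x\equiv0$ delivers a strong local minimum in this problem, then the function $\dot x\mapsto L_x(0,\dot x)$ is linear on $\mathbb R$.
   Context: A strong local minimum means: there is a neighbourhood of $\widehat x$ in the uniform norm on $C([0,1])$ such that the functional at any admissible $x$ (absolutely continuous with $x(0)=x(1)=0$) in that neighbourhood is at least its value at $\widehat x$. *)

theory Defs
  imports "HOL-Analysis.Analysis"
begin

definition absolutely_continuous_fun_on :: "real set \<Rightarrow> (real \<Rightarrow> real) \<Rightarrow> bool" where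
  "absolutely_continuous_fun_on S f \<longleftrightarrow>
     (\<forall>\<epsilon>>0. \<exists>\<delta>>0. \<forall>(n::nat) (a::nat \<Rightarrow> real) (b::nat \<Rightarrow> real).
        (\<forall>k<n. a k \<le> b k \<and> {a k..b k} \<subseteq> S) \<and>
        (\<forall>i<n. \<forall>j<n. i \<noteq> j \<longrightarrow> b i \<le> a j \<or> b j \<le> a i) \<and>
        (\<Sum>k<n. b k - a k) < \<delta>
        \<longrightarrow> (\<Sum>k<n. \<bar>f (b k) - f (a k)\<bar>) < \<epsilon>)"

definition admissible :: "(real \<Rightarrow> real) \<Rightarrow> bool" where
  "admissible x \<longleftrightarrow> absolutely_continuous_fun_on {0..1} x \<and> x 0 = 0 \<and> x 1 = 0"

text \<open>The integrand t \<mapsto> L(x(t), x'(t)); the derivative exists a.e. for admissible x.\<close>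
definition integrand :: "(real \<times> real \<Rightarrow> real) \<Rightarrow> (real \<Rightarrow> real) \<Rightarrow> real \<Rightarrow> real" where
  "integrand L x t = L (x t, vector_derivative x (at t))"

definition functional :: "(real \<times> real \<Rightarrow> real) \<Rightarrow> (real \<Rightarrow> real) \<Rightarrow> real" where
  "functional L x = integral {0..1} (integrand L x)"

definition strong_local_min :: "(real \<times> real \<Rightarrow> real) \<Rightarrow> (real \<Rightarrow> real) \<Rightarrow> bool" where
  "strong_local_min L xhat \<longleftrightarrow>
     admissible xhat \<and> integrand L xhat absolutely_integrable_on {0..1} \<and>
     (\<exists>\<delta>>0. \<forall>x. admissible x \<and> (\<forall>t\<in>{0..1}. \<bar>x t - xhat t\<bar> < \<delta>) \<and>
        integrand L x absolutely_integrable_on {0..1}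
        \<longrightarrow> functional L x \<ge> functional L xhat)"

definition Lx :: "(real \<times> real \<Rightarrow> real) \<Rightarrow> real \<times> real \<Rightarrow> real" where
  "Lx L p = deriv (\<lambda>s. L (s, snd p)) (fst p)"

definition Lv :: "(real \<times> real \<Rightarrow> real) \<Rightarrow> real \<times> real \<Rightarrow> real" where
  "Lv L p = deriv (\<lambda>v. L (fst p, v)) (snd p)"

end

(* Perturb the zero function by a tent h * hat p q rising with slope u = h / p and falling
   with slope w = - h / q, where u * w < 0. Since L (0, -) = 0, differentiability gives
   L (r, v) <= r * Lx (0, v) + e * |r| for small r, so the functional at the tent is at most
   (h^2 / 2) * (Lx (0, u) / u - Lx (0, w) / w) + O (e * h^2). Minimality makes this nonnegative;
   letting e -> 0 and exchanging u and w shows that Lx (0, v) / v is the same constant for all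
   v <> 0, which together with Lx (0, 0) = 0 is linearity. *)

theory Submission
  imports Defs
begin

lemma lipschitz_on_imp_absolutely_continuous_fun_on:
  fixes f :: "real \<Rightarrow> real"
  assumes lip: "M-lipschitz_on S f"
  shows "absolutely_continuous_fun_on S f"
proof -
  have M: "0 \<le> M" using lipschitz_on_nonneg[OF lip] .
  have small_sum: "(\<Sum>k<n. \<bar>f (b k) - f (a k)\<bar>) < \<epsilon>"
    if "\<epsilon> > 0" and intervals: "\<forall>k<n. a k \<le> b k \<and> {a k..b k} \<subseteq> S"
      and short: "(\<Sum>k<n. b k - a k) < \<epsilon> / (M + 1)" \<comment> \<open>not \<open>\<epsilon> / M\<close>: M may be 0\<close>
    for \<epsilon> n and a b :: "nat \<Rightarrow> real"
  proof -
    have "(\<Sum>k<n. \<bar>f (b k) - f (a k)\<bar>) \<le> (\<Sum>k<n. M * (b k - a k))"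
    proof (rule sum_mono)
      fix k assume "k \<in> {..<n}"
      with intervals have ab: "a k \<le> b k" and "{a k..b k} \<subseteq> S" by auto
      then have "a k \<in> S" "b k \<in> S" by auto
      then show "\<bar>f (b k) - f (a k)\<bar> \<le> M * (b k - a k)"
        using lipschitz_onD[OF lip, of "b k" "a k"] ab by (simp add: dist_real_def)
    qed
    also have "\<dots> = M * (\<Sum>k<n. b k - a k)" by (simp add: sum_distrib_left)
    also have "\<dots> \<le> M * (\<epsilon> / (M + 1))" using short M by (intro mult_left_mono) auto
    also have "\<dots> < \<epsilon>" using M \<open>\<epsilon> > 0\<close> by (simp add: field_simps)
    finally show ?thesis .
  qed
  have "\<epsilon> / (M + 1) > 0" if "\<epsilon> > 0" for \<epsilon> :: real
    using M that by simp
  with small_sum show ?thesis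
    unfolding absolutely_continuous_fun_on_def by blast
qed

lemma has_integral_affine:
  fixes y s p q :: real
  assumes "p \<le> q"
  shows "((\<lambda>t. y + s * (t - p)) has_integral (q - p) * (2 * y + s * (q - p)) / 2) {p..q}"
proof -
  have "((\<lambda>t. y * t + s * (t - p)^2 / 2) has_vector_derivative y + s * (t - p)) (at t within {p..q})"
    for t
    unfolding has_real_derivative_iff_has_vector_derivative[symmetric]
    by (auto intro!: derivative_eq_intros)
  from fundamental_theorem_of_calculus[OF assms this]
  show ?thesis by (simp add: field_simps power2_eq_square)
qed

lemma integrand_affine_segment:
  fixes L :: "real \<times> real \<Rightarrow> real"
  assumes L: "continuous_on UNIV L" and pq: "p \<le> q"
    and affine: "\<And>t. t \<in> {p..q} \<Longrightarrow> x t = y + s * (t - p)"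
    and bound: "\<And>t. t \<in> {p..q} \<Longrightarrow> L (x t, s) \<le> k * x t + m"
  shows "integrand L x absolutely_integrable_on {p..q}"
    and "integral {p..q} (integrand L x) \<le> (q - p) * (k * (x p + x q) / 2 + m)"
proof -
  define g where "g t = L (y + s * (t - p), s)" for t
  have g_cont: "continuous_on {p..q} g"
    unfolding g_def by (intro continuous_on_compose2[OF L] continuous_intros) auto
  have "integrand L x t = g t" if "t \<in> {p<..<q}" for t
  proof -
    have "((\<lambda>t. y + s * (t - p)) has_vector_derivative s) (at t)"
      unfolding has_real_derivative_iff_has_vector_derivative[symmetric]
      by (auto intro!: derivative_eq_intros)
    then have "(x has_vector_derivative s) (at t)"
      by (rule has_vector_derivative_transform_within_open[of _ _ _ "{p<..<q}"])
        (use that affine in auto)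
    then show ?thesis
      using that affine by (simp add: integrand_def g_def vector_derivative_at)
  qed
  then have spike: "\<And>t. t \<in> {p..q} - {p, q} \<Longrightarrow> integrand L x t = g t" by auto
  have ends: "negligible {p, q}" by simp
  show "integrand L x absolutely_integrable_on {p..q}"
    using absolutely_integrable_spike[OF absolutely_integrable_continuous_real[OF g_cont] ends spike] .
  have "integral {p..q} (integrand L x) = integral {p..q} g"
    using integral_spike[OF ends spike] by (rule sym)
  also have "\<dots> \<le> integral {p..q} (\<lambda>t. k * (y + s * (t - p)) + m)"
    using bound affine
    by (intro integral_le integrable_continuous_interval g_cont continuous_intros)
      (auto simp: g_def)
  also have "\<dots> = k * ((q - p) * (2 * y + s * (q - p)) / 2) + m * (q - p)"
    using has_integral_affine[OF pq, of y s] has_integral_const_real[of m p q] pq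
    by (intro integral_unique has_integral_add has_integral_mult_right) (auto simp: mult.commute)
  also have "\<dots> = (q - p) * (k * (x p + x q) / 2 + m)"
  proof -
    have xp: "x p = y" and xq: "x q = y + s * (q - p)" using affine pq by auto
    show ?thesis unfolding xp xq by (simp add: field_simps)
  qed
  finally show "integral {p..q} (integrand L x) \<le> (q - p) * (k * (x p + x q) / 2 + m)" .
qed

lemma integral_combine3:
  fixes f :: "real \<Rightarrow> real"
  assumes "a \<le> b" "b \<le> c" "c \<le> d"
    and ab: "f absolutely_integrable_on {a..b}" and bc: "f absolutely_integrable_on {b..c}"
    and cd: "f absolutely_integrable_on {c..d}"
  shows "f absolutely_integrable_on {a..d}"
    and "integral {a..d} f = integral {a..b} f + integral {b..c} f + integral {c..d} f"
proof -
  have ac: "f absolutely_integrable_on {a..c}"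
    using absolutely_integrable_on_combine[OF ab bc] assms(1,2) .
  show ad: "f absolutely_integrable_on {a..d}"
    using absolutely_integrable_on_combine[OF ac cd] assms by simp
  have "integral {a..d} f = integral {a..c} f + integral {c..d} f"
    using Henstock_Kurzweil_Integration.integral_combine[of a c d f] ad assms
    by (simp add: absolutely_integrable_on_def)
  moreover have "integral {a..c} f = integral {a..b} f + integral {b..c} f"
    using Henstock_Kurzweil_Integration.integral_combine[of a b c f] ac assms
    by (simp add: absolutely_integrable_on_def)
  ultimately show "integral {a..d} f = integral {a..b} f + integral {b..c} f + integral {c..d} f"
    by simp
qed

definition hat :: "real \<Rightarrow> real \<Rightarrow> real \<Rightarrow> real" where
  "hat p q t = max 0 (min (t / p) ((p + q - t) / q))"

context
  fixes p q :: real
  assumes p: "p > 0" and q: "q > 0"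
begin

lemma hat_rising:
  assumes "t \<in> {0..p}"
  shows "hat p q t = t / p"
proof -
  have "t / p \<le> 1" "1 \<le> (p + q - t) / q" "0 \<le> t / p"
    using assms p q by (auto simp: divide_le_eq_1 le_divide_eq_1)
  then show ?thesis by (simp add: hat_def)
qed

lemma hat_falling:
  assumes "t \<in> {p..p + q}"
  shows "hat p q t = (p + q - t) / q"
proof -
  have "(p + q - t) / q \<le> 1" "1 \<le> t / p" "0 \<le> (p + q - t) / q"
    using assms p q by (auto simp: divide_le_eq_1 le_divide_eq_1)
  then show ?thesis by (simp add: hat_def)
qed

lemma hat_vanishes:
  assumes "p + q \<le> t"
  shows "hat p q t = 0"
proof -
  have "(p + q - t) / q \<le> 0" using assms q by (simp add: divide_nonpos_pos)
  then show ?thesis by (simp add: hat_def)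
qed

lemma hat_bounds: "0 \<le> hat p q t" "hat p q t \<le> 1"
proof -
  have "t / p \<le> 1 \<or> (p + q - t) / q \<le> 1"
    using p q by (auto simp: divide_le_eq_1)
  then show "0 \<le> hat p q t" "hat p q t \<le> 1" by (auto simp: hat_def)
qed

lemma lipschitz_on_hat: "(1 / p + 1 / q)-lipschitz_on S (hat p q)"
proof (rule lipschitz_onI)
  fix s t :: real
  have "\<bar>s / p - t / p\<bar> = \<bar>s - t\<bar> / p" "\<bar>(p + q - s) / q - (p + q - t) / q\<bar> = \<bar>s - t\<bar> / q"
    using p q by (simp_all add: diff_divide_distrib[symmetric] abs_divide abs_minus_commute)
  moreover have "\<bar>s - t\<bar> / p \<le> (1 / p + 1 / q) * \<bar>s - t\<bar>" "\<bar>s - t\<bar> / q \<le> (1 / p + 1 / q) * \<bar>s - t\<bar>"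
    using p q by (simp_all add: distrib_right)
  ultimately have "\<bar>s / p - t / p\<bar> \<le> (1 / p + 1 / q) * \<bar>s - t\<bar>"
    and "\<bar>(p + q - s) / q - (p + q - t) / q\<bar> \<le> (1 / p + 1 / q) * \<bar>s - t\<bar>"
    by simp_all
  moreover have "\<bar>max 0 (min a b) - max 0 (min a' b')\<bar> \<le> D"
    if "\<bar>a - a'\<bar> \<le> D" "\<bar>b - b'\<bar> \<le> D" for a b a' b' D :: real
    using that by (simp add: max_def min_def abs_if split: if_splits)
  ultimately show "dist (hat p q s) (hat p q t) \<le> (1 / p + 1 / q) * dist s t"
    unfolding hat_def dist_real_def by blast
qed (use p q in simp)

lemma admissible_scaled_hat:
  assumes "p + q \<le> 1"
  shows "admissible (\<lambda>t. h * hat p q t)"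
proof -
  have "absolutely_continuous_fun_on {0..1} (\<lambda>t. h * hat p q t)"
    by (rule lipschitz_on_imp_absolutely_continuous_fun_on[OF lipschitz_on_cmult_real[OF lipschitz_on_hat]])
  moreover have "hat p q 0 = 0" using hat_rising[of 0] p by simp
  moreover have "hat p q 1 = 0" using hat_vanishes assms by simp
  ultimately show ?thesis by (simp add: admissible_def)
qed

lemma functional_scaled_hat_le:
  fixes L :: "real \<times> real \<Rightarrow> real"
  assumes L: "continuous_on UNIV L" and L00: "L (0, 0) = 0" and short: "p + q \<le> 1"
    and rise: "\<And>r. \<bar>r\<bar> \<le> \<bar>h\<bar> \<Longrightarrow> L (r, h / p) \<le> k1 * r + m"
    and fall: "\<And>r. \<bar>r\<bar> \<le> \<bar>h\<bar> \<Longrightarrow> L (r, - h / q) \<le> k2 * r + m"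
  shows "integrand L (\<lambda>t. h * hat p q t) absolutely_integrable_on {0..1}"
    and "functional L (\<lambda>t. h * hat p q t) \<le> h * (k1 * p + k2 * q) / 2 + m * (p + q)"
proof -
  define x where "x = (\<lambda>t. h * hat p q t)"
  have small: "\<bar>x t\<bar> \<le> \<bar>h\<bar>" for t
    using hat_bounds[of t] by (simp add: x_def abs_mult mult_left_le)
  have up: "x t = 0 + h / p * (t - 0)" if "t \<in> {0..p}" for t
    using hat_rising[OF that] by (simp add: x_def)
  have down: "x t = h + - h / q * (t - p)" if "t \<in> {p..p + q}" for t
  proof -
    have "h * ((p + q - t) / q) = h + - h / q * (t - p)" using q by (simp add: field_simps)
    then show ?thesis using hat_falling[OF that] by (simp add: x_def)
  qed
  have flat: "x t = 0 + 0 * (t - (p + q))" if "t \<in> {p + q..1}" for t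
    using hat_vanishes that by (simp add: x_def)
  have seg1: "integrand L x absolutely_integrable_on {0..p}"
    "integral {0..p} (integrand L x) \<le> (p - 0) * (k1 * (x 0 + x p) / 2 + m)"
    using integrand_affine_segment[OF L _ up rise[OF small]] p by auto
  have seg2: "integrand L x absolutely_integrable_on {p..p + q}"
    "integral {p..p + q} (integrand L x) \<le> (p + q - p) * (k2 * (x p + x (p + q)) / 2 + m)"
    using integrand_affine_segment[where q = "p + q", OF L _ down fall[OF small]] q by simp_all
  have seg3: "integrand L x absolutely_integrable_on {p + q..1}"
    "integral {p + q..1} (integrand L x) \<le> (1 - (p + q)) * (0 * (x (p + q) + x 1) / 2 + 0)"
    using integrand_affine_segment[OF L short flat, of 0 0] L00 flat by auto
  have "x 0 = 0" "x p = h" "x (p + q) = 0" using up[of 0] up[of p] flat[of "p + q"] p q short by auto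
  note whole = integral_combine3[OF _ _ short seg1(1) seg2(1) seg3(1)]
  show "integrand L (\<lambda>t. h * hat p q t) absolutely_integrable_on {0..1}"
    using whole(1) p q by (simp add: x_def)
  have "p * (k1 * h / 2 + m) + q * (k2 * h / 2 + m) = h * (k1 * p + k2 * q) / 2 + m * (p + q)"
    by (simp add: algebra_simps)
  then have "functional L x \<le> h * (k1 * p + k2 * q) / 2 + m * (p + q)"
    using whole(2) seg1(2) seg2(2) seg3(2) \<open>x 0 = 0\<close> \<open>x p = h\<close> \<open>x (p + q) = 0\<close> p q
    by (simp add: functional_def)
  then show "functional L (\<lambda>t. h * hat p q t) \<le> h * (k1 * p + k2 * q) / 2 + m * (p + q)"
    by (simp add: x_def)
qed

end

lemma strong_local_min_zero_imp_scaled_hat_nonneg: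
  fixes L :: "real \<times> real \<Rightarrow> real"
  assumes minimum: "strong_local_min L (\<lambda>t. 0)" and L0: "\<forall>v. L (0, v) = 0"
  obtains d where "d > 0"
    and "\<And>h p q. p > 0 \<Longrightarrow> q > 0 \<Longrightarrow> p + q \<le> 1 \<Longrightarrow> \<bar>h\<bar> < d \<Longrightarrow>
      integrand L (\<lambda>t. h * hat p q t) absolutely_integrable_on {0..1} \<Longrightarrow>
      0 \<le> functional L (\<lambda>t. h * hat p q t)"
proof -
  obtain d where "d > 0" and d: "\<And>x. admissible x \<Longrightarrow> \<forall>t\<in>{0..1}. \<bar>x t - 0\<bar> < d \<Longrightarrow>
      integrand L x absolutely_integrable_on {0..1} \<Longrightarrow> functional L (\<lambda>t. 0) \<le> functional L x"
    using minimum unfolding strong_local_min_def by blast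
  have "integrand L (\<lambda>t. 0) = (\<lambda>t. 0)" using L0 by (simp add: integrand_def fun_eq_iff)
  then have zero: "functional L (\<lambda>t. 0) = 0" by (simp add: functional_def)
  have near: "\<forall>t\<in>{0..1}. \<bar>h * hat p q t - 0\<bar> < d" if "p > 0" "q > 0" "\<bar>h\<bar> < d" for h p q
  proof
    fix t
    have "\<bar>h * hat p q t\<bar> \<le> \<bar>h\<bar>"
      using hat_bounds[OF that(1,2), of t] by (simp add: abs_mult mult_left_le)
    then show "\<bar>h * hat p q t - 0\<bar> < d" using that(3) by simp
  qed
  show thesis
    by (rule that[OF \<open>d > 0\<close>]) (use d[OF admissible_scaled_hat near] zero in auto)
qed

lemma hat_parameters_for_slopes:
  fixes u w \<delta> :: real
  assumes opposite: "u * w < 0" and "\<delta> > 0"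
  obtains p q h where "p > 0" "q > 0" "\<bar>h\<bar> = \<delta>" "h / p = u" "- h / q = w"
    "p + q = \<delta> * (1 / \<bar>u\<bar> + 1 / \<bar>w\<bar>)" "h * p = \<delta>^2 / u" "h * q = - (\<delta>^2 / w)"
proof
  have "u \<noteq> 0" "w \<noteq> 0" using opposite by auto
  define p q where "p = \<delta> / \<bar>u\<bar>" and "q = \<delta> / \<bar>w\<bar>"
  show "p > 0" "q > 0" using \<open>\<delta> > 0\<close> \<open>u \<noteq> 0\<close> \<open>w \<noteq> 0\<close> by (simp_all add: p_def q_def)
  show "p + q = \<delta> * (1 / \<bar>u\<bar> + 1 / \<bar>w\<bar>)" by (simp add: p_def q_def field_simps)
  show "\<bar>u * p\<bar> = \<delta>" using \<open>u \<noteq> 0\<close> \<open>\<delta> > 0\<close> by (simp add: p_def abs_mult)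
  show "u * p / p = u" using \<open>p > 0\<close> by simp
  have "u * p * p = u * \<delta>^2 / (\<bar>u\<bar> * \<bar>u\<bar>)" by (simp add: p_def power2_eq_square)
  also have "\<dots> = \<delta>^2 / u" using \<open>u \<noteq> 0\<close> by (simp add: abs_mult_self_eq)
  finally show "u * p * p = \<delta>^2 / u" .
  have "- (u * p) / q = w \<and> u * p * q = - (\<delta>^2 / w)"
  proof (cases "u > 0")
    case True
    with opposite have "w < 0" by (simp add: mult_less_0_iff)
    with True \<open>\<delta> > 0\<close> show ?thesis by (simp add: p_def q_def power2_eq_square field_simps)
  next
    case False
    with opposite have "u < 0" "w > 0" by (auto simp: mult_less_0_iff)
    with \<open>\<delta> > 0\<close> show ?thesis by (simp add: p_def q_def power2_eq_square field_simps)
  qed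
  then show "- (u * p) / q = w" "u * p * q = - (\<delta>^2 / w)" by simp_all
qed

lemma first_order_upper_bound:
  fixes L :: "real \<times> real \<Rightarrow> real"
  assumes diff: "L differentiable (at (0, s))" and L0: "L (0, s) = 0" and e: "e > 0"
  obtains d where "d > 0" "\<And>r \<rho>. \<bar>r\<bar> \<le> \<rho> \<Longrightarrow> \<rho> < d \<Longrightarrow> L (r, s) \<le> Lx L (0, s) * r + e * \<rho>"
proof -
  have "(\<lambda>r::real. (r, s)) differentiable (at 0)"
    by (auto intro!: derivative_intros simp: differentiable_def)
  then have "(\<lambda>r. L (r, s)) differentiable (at 0)"
    using differentiable_chain_at[of "\<lambda>r::real. (r, s)" 0 L] diff by (simp add: o_def)
  then have "((\<lambda>r. L (r, s)) has_derivative (\<lambda>h. Lx L (0, s) * h)) (at 0)"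
    by (simp add: Lx_def DERIV_deriv_iff_real_differentiable[symmetric] has_field_derivative_def)
  then obtain d where "d > 0"
    and d: "\<And>r. norm (r - 0) < d \<Longrightarrow>
      norm (L (r, s) - L (0, s) - Lx L (0, s) * (r - 0)) \<le> e * norm (r - 0)"
    using e unfolding has_derivative_at_alt by blast
  show thesis
  proof (rule that[OF \<open>d > 0\<close>])
    fix r \<rho> :: real assume "\<bar>r\<bar> \<le> \<rho>" "\<rho> < d"
    then have "L (r, s) \<le> Lx L (0, s) * r + e * \<bar>r\<bar>" using d[of r] L0 by simp
    also have "\<dots> \<le> Lx L (0, s) * r + e * \<rho>" using \<open>\<bar>r\<bar> \<le> \<rho>\<close> e by simp
    finally show "L (r, s) \<le> Lx L (0, s) * r + e * \<rho>" .
  qed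
qed

lemma Lx_ratio_le:
  fixes L :: "real \<times> real \<Rightarrow> real"
  assumes diff: "\<forall>p. L differentiable (at p)" and L0: "\<forall>v. L (0, v) = 0"
    and minimum: "strong_local_min L (\<lambda>t. 0)" and opposite: "u * w < 0"
  shows "Lx L (0, w) / w \<le> Lx L (0, u) / u"
proof (rule field_le_epsilon)
  fix \<epsilon> :: real assume "\<epsilon> > 0"
  define B where "B = 1 / \<bar>u\<bar> + 1 / \<bar>w\<bar>"
  have "u \<noteq> 0" "w \<noteq> 0" using opposite by auto
  then have "B > 0" by (simp add: B_def add_pos_pos)
  \<comment> \<open>so that the error e \<delta> (p + q) = e B \<delta>^2 of the tent below is \<epsilon> \<delta>^2 / 2\<close>
  define e where "e = \<epsilon> / (2 * B)"
  have "e > 0" using \<open>\<epsilon> > 0\<close> \<open>B > 0\<close> by (simp add: e_def)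
  have L: "continuous_on UNIV L"
    using diff by (simp add: continuous_at_imp_continuous_on differentiable_imp_continuous_within)
  obtain d0 where "d0 > 0" and d0: "\<And>h p q. p > 0 \<Longrightarrow> q > 0 \<Longrightarrow> p + q \<le> 1 \<Longrightarrow> \<bar>h\<bar> < d0 \<Longrightarrow>
      integrand L (\<lambda>t. h * hat p q t) absolutely_integrable_on {0..1} \<Longrightarrow>
      0 \<le> functional L (\<lambda>t. h * hat p q t)"
    using strong_local_min_zero_imp_scaled_hat_nonneg[OF minimum L0] by blast
  obtain d1 where "d1 > 0"
    and d1: "\<And>r \<rho>. \<bar>r\<bar> \<le> \<rho> \<Longrightarrow> \<rho> < d1 \<Longrightarrow> L (r, u) \<le> Lx L (0, u) * r + e * \<rho>"
    using first_order_upper_bound[of L u e] diff L0 \<open>e > 0\<close> by blast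
  obtain d2 where "d2 > 0"
    and d2: "\<And>r \<rho>. \<bar>r\<bar> \<le> \<rho> \<Longrightarrow> \<rho> < d2 \<Longrightarrow> L (r, w) \<le> Lx L (0, w) * r + e * \<rho>"
    using first_order_upper_bound[of L w e] diff L0 \<open>e > 0\<close> by blast
  define \<delta> where "\<delta> = min (min d0 d1) (min d2 (1 / B)) / 2"
  have "1 / B < 2 / B" using \<open>B > 0\<close> by (simp add: divide_strict_right_mono)
  then have "\<delta> > 0" "\<delta> < d0" "\<delta> < d1" "\<delta> < d2" "\<delta> < 1 / B"
    using \<open>d0 > 0\<close> \<open>d1 > 0\<close> \<open>d2 > 0\<close> \<open>B > 0\<close> unfolding \<delta>_def min_def by auto
  obtain p q h where "p > 0" "q > 0" "\<bar>h\<bar> = \<delta>" "h / p = u" "- h / q = w"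
    and "p + q = \<delta> * B" "h * p = \<delta>^2 / u" "h * q = - (\<delta>^2 / w)"
    using hat_parameters_for_slopes[OF opposite \<open>\<delta> > 0\<close>] unfolding B_def by blast
  have "p + q \<le> 1" using \<open>p + q = \<delta> * B\<close> \<open>\<delta> < 1 / B\<close> \<open>B > 0\<close> by (simp add: less_divide_eq)
  have rise: "L (r, h / p) \<le> Lx L (0, u) * r + e * \<delta>" if "\<bar>r\<bar> \<le> \<bar>h\<bar>" for r
    using d1[of r \<delta>] that \<open>\<bar>h\<bar> = \<delta>\<close> \<open>\<delta> < d1\<close> \<open>h / p = u\<close> by simp
  have fall: "L (r, - h / q) \<le> Lx L (0, w) * r + e * \<delta>" if "\<bar>r\<bar> \<le> \<bar>h\<bar>" for r
    using d2[of r \<delta>] that \<open>\<bar>h\<bar> = \<delta>\<close> \<open>\<delta> < d2\<close> \<open>- h / q = w\<close> by simp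
  note tent = functional_scaled_hat_le[OF \<open>p > 0\<close> \<open>q > 0\<close> L _ \<open>p + q \<le> 1\<close> rise fall]
  have "0 \<le> functional L (\<lambda>t. h * hat p q t)"
    using d0[OF \<open>p > 0\<close> \<open>q > 0\<close> \<open>p + q \<le> 1\<close>] tent(1) L0 \<open>\<bar>h\<bar> = \<delta>\<close> \<open>\<delta> < d0\<close> by simp
  also have "\<dots> \<le> h * (Lx L (0, u) * p + Lx L (0, w) * q) / 2 + e * \<delta> * (p + q)"
    using tent(2) L0 by simp
  also have "\<dots> = (Lx L (0, u) * (h * p) + Lx L (0, w) * (h * q)) / 2 + \<delta>^2 * (e * B)"
    using \<open>p + q = \<delta> * B\<close> by (simp add: algebra_simps power2_eq_square)
  also have "\<dots> = \<delta>^2 / 2 * (Lx L (0, u) / u - Lx L (0, w) / w + \<epsilon>)"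
    unfolding \<open>h * p = \<delta>^2 / u\<close> \<open>h * q = - (\<delta>^2 / w)\<close>
    using \<open>B > 0\<close> by (simp add: e_def field_simps)
  finally show "Lx L (0, w) / w \<le> Lx L (0, u) / u + \<epsilon>"
    using \<open>\<delta> > 0\<close> by (simp add: zero_le_mult_iff)
qed

theorem mainTheorem3:
  fixes L :: "real \<times> real \<Rightarrow> real"
  assumes diff: "\<forall>p. L differentiable (at p)"
    and C1x: "continuous_on UNIV (Lx L)"
    and C1v: "continuous_on UNIV (Lv L)"
    and Lx00: "Lx L (0, 0) = 0"
    and Lv00: "Lv L (0, 0) = 0"
    and L0: "\<forall>v. L (0, v) = 0"
    and minimum: "strong_local_min L (\<lambda>t. 0)"
  shows "linear (\<lambda>v. Lx L (0, v))"
proof -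
  have ratio: "Lx L (0, u) / u = Lx L (0, w) / w" if "u * w < 0" for u w
    using Lx_ratio_le[OF diff L0 minimum, of u w] Lx_ratio_le[OF diff L0 minimum, of w u] that
    by (simp add: mult.commute)
  define c where "c = Lx L (0, 1)"
  have "Lx L (0, v) = c * v" for v
  proof (cases v "0 :: real" rule: linorder_cases)
    case less
    then show ?thesis using ratio[of v 1] by (simp add: c_def field_simps)
  next
    case equal
    then show ?thesis using Lx00 by simp
  next
    case greater
    then show ?thesis using ratio[of v "-1"] ratio[of 1 "-1"] by (simp add: c_def field_simps)
  qed
  then show ?thesis by simp
qed

end
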